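(* Assume the standing setting and let $u$ be an entropy solution of (E). Then for a.e. $(t,x)\in Q$, $$\min\Big\{\operatorname*{ess\,inf}_{\Omega}u_0,\ \operatorname*{ess\,inf}_{Q^c}u^c\Big\}\le u(t,x)\le\max\Big\{\operatorname*{ess\,sup}_{\Omega}u_0,\ \operatorname*{ess\,sup}_{Q^c}u^c\Big\}.$$
   Context: Standing setting. Let $d\ge1$, $T>0$. $\Omega\subset\mathbb{R}^d$ is open, bounded, with $C^2$ boundary; $\sigma$ denotes $(d-1)$-dimensional Hausdorff measure on $\partial\Omega$. Set $Q=(0,T)\times\Omega$, $\Omega^c=\mathbb{R}^d\setminus\Omega$, $Q^c=(0,T)\times\Omega^c$, $\Gamma=(0,T)\times\partial\Omega$, $M=(0,T)\times\mathbb{R}^d$. Data: $f\in W^{1,\infty}_{loc}(\mathbb{R};\mathbb{R}^d)$; $b\in W^{1,\infty}_{loc}(\mathbb{R};\mathbb{R})$ nondecreasing, with $b'$ of locally bounded variation; $u^c\in C^2\cap L^\infty(Q^c)$ with a fixed extension $\bar u^c\in C^2\cap L^\infty([0,T]\times\mathbb{R}^d)$; $u_0\in L^\infty(\Omega)$; $\mu$ a symmetric nonnegative Radon measure on $\mathbb{R}^d\setminus\{0\}$ with $\int(|z|^2\wedge1)\,d\mu<\infty$. $L_f$ is a fixed Lipschitz constant of $f$ on a bounded interval containing the essential ranges of $u_0$, $\bar u^c$ and the solutions considered. Operators: $\mathcal L^{\ge r}[\phi](x)=\int_{|z|\ge r}(\phi(x+z)-\phi(x))\,d\mu(z)$ for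 bounded Borel $\phi$; $\mathcal L^{<r}[\phi](x)=\lim_{\epsilon\to0}\int_{\epsilon<|z|<r}(\phi(x+z)-\phi(x))\,d\mu(z)$ for $\phi\in C^2_c$; they act in $x$ on functions of $(t,x)$. Notation: $a^\pm$ positive/negative parts; $\mathrm{sgn}^\pm(a)=\pm1$ if $\pm a>0$, else $0$; $F^\pm(u,k)=\mathrm{sgn}^\pm(u-k)(f(u)-f(k))$. Problem (E): $\partial_tu+\mathrm{div}(f(u))=\mathcal L[b(u)]$ in $Q$, $u=u^c$ in $Q^c$, $u(0,\cdot)=u_0$. Definition (entropy solution). A Borel $u\in L^\infty(M)$ is an entropy solution of (E) if: (a) for all $r>0$, $k\in\mathbb{R}$, $0\le\varphi\in C^\infty_c([0,T)\times\mathbb{R}^d)$ and sign $\pm$ with $(b(u^c)-b(k))^\pm\varphi=0$ a.e. in $Q^c$, $$-\int_Q\big((u-k)^\pm\partial_t\varphi+F^\pm(u,k)\cdot\nabla\varphi\big)-\int_Q\mathcal L^{\ge r}[b(u)]\mathrm{sgn}^\pm(u-k)\varphi-\int_M(b(u)-b(k))^\pm\mathcal L^{<r}[\varphi]\le\int_\Omega(u_0-k)^\pm\varphi(0,\cdot)\,dx+L_f\int_\Gamma(\bar u^c-k)^\pm\varphi\,d\sigma\,dt;$$ (b) $u=u^c$ a.e. in $Q^c$. *)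

theory Defs
  imports "HOL-Analysis.Analysis"
begin

coinductive smooth_fun :: "('a::real_normed_vector \<Rightarrow> real) \<Rightarrow> bool" where
  "(\<And>x. (f has_derivative f' x) (at x)) \<Longrightarrow> (\<And>v. smooth_fun (\<lambda>x. f' x v)) \<Longrightarrow> smooth_fun f"

definition C2_on :: "'a::real_normed_vector set \<Rightarrow> ('a \<Rightarrow> real) \<Rightarrow> bool" where
  "C2_on U g \<longleftrightarrow> (\<exists>(D :: 'a \<Rightarrow> ('a \<Rightarrow>\<^sub>L real)) (D2 :: 'a \<Rightarrow> ('a \<Rightarrow>\<^sub>L ('a \<Rightarrow>\<^sub>L real))).
     (\<forall>x\<in>U. (g has_derivative blinfun_apply (D x)) (at x) \<and>
             (D has_derivative blinfun_apply (D2 x)) (at x)) \<and> continuous_on U D2)"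

definition C2_boundary :: "'a::euclidean_space set \<Rightarrow> bool" where
  "C2_boundary \<Omega> \<longleftrightarrow> (\<forall>p\<in>frontier \<Omega>. \<exists>U \<rho>. open U \<and> p \<in> U \<and> C2_on U \<rho> \<and>
      (\<forall>x\<in>U. x \<in> \<Omega> \<longleftrightarrow> \<rho> x < 0) \<and> frechet_derivative \<rho> (at p) \<noteq> (\<lambda>h. 0))"

text \<open>W^{1,infinity}_loc(R) = locally Lipschitz.\<close>
definition loc_lipschitz :: "(real \<Rightarrow> 'b::metric_space) \<Rightarrow> bool" where
  "loc_lipschitz g \<longleftrightarrow> (\<forall>a c. \<exists>L. lipschitz_on L {a..c} g)"

definition loc_bounded_variation :: "(real \<Rightarrow> real) \<Rightarrow> bool" where
  "loc_bounded_variation g \<longleftrightarrow> (\<forall>a c. \<exists>V. \<forall>(n::nat) (xs :: nat \<Rightarrow> real).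
      (\<forall>i\<le>n. xs i \<in> {a..c}) \<and> (\<forall>i<n. xs i \<le> xs (Suc i)) \<longrightarrow>
      (\<Sum>i<n. \<bar>g (xs (Suc i)) - g (xs i)\<bar>) \<le> V)"

text \<open>b' (the a.e. derivative of the locally Lipschitz b) has a representative of locally
bounded variation.\<close>
definition deriv_loc_bv :: "(real \<Rightarrow> real) \<Rightarrow> bool" where
  "deriv_loc_bv b \<longleftrightarrow> (\<exists>g. (\<forall>x y. x \<le> y \<longrightarrow> (g has_integral (b y - b x)) {x..y}) \<and>
      loc_bounded_variation g)"

definition unit_ball_vol :: "nat \<Rightarrow> real" where
  "unit_ball_vol s = pi powr (real s / 2) / Gamma (real s / 2 + 1)"

definition hausdorff_outer :: "nat \<Rightarrow> 'a::metric_space set \<Rightarrow> ennreal" where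
  "hausdorff_outer s A = (SUP \<delta>\<in>{0<..}. INF C\<in>{C :: nat \<Rightarrow> 'a set.
       A \<subseteq> (\<Union>i. C i) \<and> (\<forall>i. bounded (C i) \<and> diameter (C i) \<le> \<delta>)}.
       (\<Sum>i. ennreal (if C i = {} then 0
                        else unit_ball_vol s / 2 ^ s * diameter (C i) ^ s)))"

definition surface_measure :: "'a::euclidean_space set \<Rightarrow> 'a measure" where
  "surface_measure \<Omega> = measure_of (frontier \<Omega>) {B \<inter> frontier \<Omega> | B. B \<in> sets borel}
      (hausdorff_outer (DIM('a) - 1))"

definition ess_sup_on :: "'a::euclidean_space set \<Rightarrow> ('a \<Rightarrow> real) \<Rightarrow> ereal" where
  "ess_sup_on A g = Inf {z. AE x in lebesgue. x \<in> A \<longrightarrow> ereal (g x) \<le> z}"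

definition ess_inf_on :: "'a::euclidean_space set \<Rightarrow> ('a \<Rightarrow> real) \<Rightarrow> ereal" where
  "ess_inf_on A g = Sup {z. AE x in lebesgue. x \<in> A \<longrightarrow> z \<le> ereal (g x)}"

section \<open>Signs, parts, fluxes (pos = True is the + case, pos = False the - case)\<close>

definition ppart :: "bool \<Rightarrow> real \<Rightarrow> real" where
  "ppart pos a = (if pos then max a 0 else max (- a) 0)"

definition sgnpm :: "bool \<Rightarrow> real \<Rightarrow> real" where
  "sgnpm pos a = (if pos then (if a > 0 then 1 else 0) else (if a < 0 then -1 else 0))"

definition Fpm :: "bool \<Rightarrow> (real \<Rightarrow> 'a::real_vector) \<Rightarrow> real \<Rightarrow> real \<Rightarrow> 'a" where
  "Fpm pos f v k = sgnpm pos (v - k) *\<^sub>R (f v - f k)"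

definition cylQ :: "real \<Rightarrow> 'a set \<Rightarrow> (real \<times> 'a) set" where
  "cylQ T \<Omega> = {p. 0 < fst p \<and> fst p < T \<and> snd p \<in> \<Omega>}"

definition cylQc :: "real \<Rightarrow> 'a set \<Rightarrow> (real \<times> 'a) set" where
  "cylQc T \<Omega> = {p. 0 < fst p \<and> fst p < T \<and> snd p \<notin> \<Omega>}"

definition cylM :: "real \<Rightarrow> (real \<times> 'a) set" where
  "cylM T = {p. 0 < fst p \<and> fst p < T}"

definition Lge :: "'a::euclidean_space measure \<Rightarrow> real \<Rightarrow> ('a \<Rightarrow> real) \<Rightarrow> 'a \<Rightarrow> real" where
  "Lge \<mu> r \<phi> x = (LINT z:{z. r \<le> norm z}|\<mu>. \<phi> (x + z) - \<phi> x)"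

definition Llt :: "'a::euclidean_space measure \<Rightarrow> real \<Rightarrow> ('a \<Rightarrow> real) \<Rightarrow> 'a \<Rightarrow> real" where
  "Llt \<mu> r \<phi> x = Lim (at_right 0)
      (\<lambda>\<epsilon>. LINT z:{z. \<epsilon> < norm z \<and> norm z < r}|\<mu>. \<phi> (x + z) - \<phi> x)"

definition test_fn :: "real \<Rightarrow> (real \<times> 'a::euclidean_space \<Rightarrow> real) \<Rightarrow> bool" where
  "test_fn T \<phi> \<longleftrightarrow> smooth_fun \<phi> \<and> compact (closure {p. \<phi> p \<noteq> 0}) \<and>
     closure {p. \<phi> p \<noteq> 0} \<subseteq> {p. fst p < T} \<and>
     (\<forall>p. 0 \<le> fst p \<longrightarrow> fst p < T \<longrightarrow> 0 \<le> \<phi> p)"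

definition entropy_solution ::
  "'a::euclidean_space set \<Rightarrow> real \<Rightarrow> (real \<Rightarrow> 'a) \<Rightarrow> (real \<Rightarrow> real) \<Rightarrow> 'a measure \<Rightarrow>
   (real \<times> 'a \<Rightarrow> real) \<Rightarrow> ('a \<Rightarrow> real) \<Rightarrow> real \<Rightarrow> (real \<times> 'a \<Rightarrow> real) \<Rightarrow> bool" where
  "entropy_solution \<Omega> T f b \<mu> uc u0 Lf u \<longleftrightarrow>
     u \<in> borel_measurable borel \<and>
     (\<exists>C. AE p in lebesgue. p \<in> cylM T \<longrightarrow> \<bar>u p\<bar> \<le> C) \<and>
     (\<forall>r>0. \<forall>k. \<forall>\<phi>. \<forall>pos.
        test_fn T \<phi> \<and>
        (AE p in lebesgue. p \<in> cylQc T \<Omega> \<longrightarrow> ppart pos (b (uc p) - b k) * \<phi> p = 0) \<longrightarrow>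
        - (LINT p:cylQ T \<Omega>|lebesgue.
              ppart pos (u p - k) * frechet_derivative \<phi> (at p) (1, 0)
            + frechet_derivative \<phi> (at p) (0, Fpm pos f (u p) k))
        - (LINT p:cylQ T \<Omega>|lebesgue.
              Lge \<mu> r (\<lambda>y. b (u (fst p, y))) (snd p) * sgnpm pos (u p - k) * \<phi> p)
        - (LINT p:cylM T|lebesgue.
              ppart pos (b (u p) - b k) * Llt \<mu> r (\<lambda>y. \<phi> (fst p, y)) (snd p))
        \<le> (LINT x:\<Omega>|lebesgue. ppart pos (u0 x - k) * \<phi> (0, x))
          + Lf * (LINT t:{0<..<T}|lborel.
                    (LINT x|surface_measure \<Omega>. ppart pos (uc (t, x) - k) * \<phi> (t, x)))) \<and>
     (AE p in lebesgue. p \<in> cylQc T \<Omega> \<longrightarrow> u p = uc p)"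

end

theory Submission
  imports Defs "HOL-Computational_Algebra.Polynomial"
begin

text \<open>
  Take a level \<open>k\<close> above the essential suprema of \<open>u\<^sub>0\<close> and \<open>u\<^sup>c\<close> (the lower bound is
  symmetric) and test the entropy inequality for \<open>(u - k)\<^sup>+\<close> with \<open>\<phi>(t, x) = \<chi>(t) \<psi>(x)\<close>,
  where \<open>\<chi>\<close> decreases smoothly from 1 to 0 on a time interval \<open>[s\<^sub>1, s\<^sub>2]\<close> and \<open>\<psi> = 1\<close> on a
  large ball.  The initial term vanishes, and so does the lateral boundary term: \<open>u\<^sup>c\<close> is
  continuous and, by the \<open>C\<^sup>2\<close> boundary, every neighbourhood of a point of \<open>\<partial>\<Omega>\<close> contains an
  open piece of the exterior, where \<open>u\<^sup>c \<le> k\<close> a.e.  The flux term vanishes because \<open>\<phi>\<close> does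
  not depend on \<open>x\<close> over \<open>\<Omega>\<close>, and so does the small-jump term, since \<open>\<psi>\<close> is locally
  constant near \<open>\<Omega>\<close> while \<open>(b(u) - b(k))\<^sup>+ = 0\<close> outside.  Long jumps leave \<open>\<Omega>\<close>,
  where \<open>u \<le> k\<close>, so by monotonicity of \<open>b\<close> the large-jump term has a sign.  What is
  left is \<open>\<integral>\<^sub>Q (u - k)\<^sup>+ \<chi>'(t) \<ge> 0\<close> with \<open>\<chi>' < 0\<close> on \<open>(s\<^sub>1, s\<^sub>2)\<close>, so \<open>u \<le> k\<close> a.e. there.
\<close>

section \<open>Smooth functions generated by \<open>exp (- 1 / t)\<close>\<close>

definition exp_inv_poly :: "real poly \<Rightarrow> real \<Rightarrow> real" where
  "exp_inv_poly P t = (if 0 < t then poly P (inverse t) * exp (- inverse t) else 0)"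

text \<open>\<open>d/dt (P(1/t) exp(-1/t)) = (P - P')(1/t) exp(-1/t) / t\<^sup>2\<close>\<close>

definition exp_inv_deriv_poly :: "real poly \<Rightarrow> real poly" where
  "exp_inv_deriv_poly P = (P - pderiv P) * [:0, 0, 1:]"

lemma tendsto_poly_times_exp_neg_at_top: "((\<lambda>y. poly P y * exp (- y)) \<longlongrightarrow> (0::real)) at_top"
proof -
  have "((\<lambda>y. \<Sum>i\<le>degree P. coeff P i * (y ^ i / exp y)) \<longlongrightarrow> (\<Sum>i\<le>degree P. coeff P i * 0)) at_top"
    by (intro tendsto_sum tendsto_mult tendsto_const tendsto_power_div_exp_0)
  then show ?thesis
    by (simp add: poly_altdef sum_distrib_right exp_minus divide_inverse mult.assoc)
qed

lemma tendsto_exp_inv_poly_at_0: "(exp_inv_poly P \<longlongrightarrow> 0) (at 0)"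
proof (rule filterlim_split_at)
  have "eventually (\<lambda>t. exp_inv_poly P t = 0) (at_left (0::real))"
    by (rule eventually_mono[OF eventually_at_left_real[of "-1"]]) (auto simp: exp_inv_poly_def)
  then show "(exp_inv_poly P \<longlongrightarrow> 0) (at_left 0)"
    by (rule tendsto_eventually)
  have "((\<lambda>t. poly P (inverse t) * exp (- inverse t)) \<longlongrightarrow> 0) (at_right 0)"
    using tendsto_poly_times_exp_neg_at_top[of P] by (simp add: filterlim_at_right_to_top)
  then show "(exp_inv_poly P \<longlongrightarrow> 0) (at_right 0)"
    by (rule Lim_transform_eventually)
       (auto intro: eventually_mono[OF eventually_at_right_real[of 0 1]] simp: exp_inv_poly_def)
qed

lemma exp_inv_poly_has_real_derivative:
  "(exp_inv_poly P has_real_derivative exp_inv_poly (exp_inv_deriv_poly P) t) (at t)"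
proof -
  consider "t < 0" | "t = 0" | "t > 0" by fastforce
  then show ?thesis
  proof cases
    case 1
    have "(exp_inv_poly P has_real_derivative 0) (at t)"
      by (rule has_field_derivative_transform_within_open[of "\<lambda>_. 0" _ _ "{..<0}"])
         (use 1 in \<open>auto simp: exp_inv_poly_def\<close>)
    then show ?thesis
      using 1 by (simp add: exp_inv_poly_def)
  next
    case 2
    \<comment> \<open>the difference quotient at 0 is again of this form\<close>
    have "(\<lambda>h. (exp_inv_poly P (0 + h) - exp_inv_poly P 0) / h) = exp_inv_poly (pCons 0 P)"
      by (simp add: fun_eq_iff exp_inv_poly_def divide_inverse ac_simps)
    then have "((\<lambda>h. (exp_inv_poly P (0 + h) - exp_inv_poly P 0) / h) \<longlongrightarrow> 0) (at 0)"
      using tendsto_exp_inv_poly_at_0 by metis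
    then show ?thesis
      using 2 by (simp add: DERIV_def exp_inv_poly_def)
  next
    case 3
    have "((\<lambda>t. poly P (inverse t) * exp (- inverse t)) has_real_derivative
        exp_inv_poly (exp_inv_deriv_poly P) t) (at t)"
      using 3 by (auto intro!: derivative_eq_intros DERIV_chain2[OF poly_DERIV]
          simp: exp_inv_poly_def exp_inv_deriv_poly_def power2_eq_square algebra_simps)
    then show ?thesis
      by (rule has_field_derivative_transform_within_open[where S="{0<..}"])
         (use 3 in \<open>auto simp: exp_inv_poly_def\<close>)
  qed
qed

inductive elementary_smooth :: "('a::real_inner \<Rightarrow> real) \<Rightarrow> bool" where
  const: "elementary_smooth (\<lambda>_. c)"
| linear: "bounded_linear l \<Longrightarrow> elementary_smooth l"
| inner_self: "elementary_smooth (\<lambda>x. inner x x)"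
| add: "elementary_smooth f \<Longrightarrow> elementary_smooth g \<Longrightarrow> elementary_smooth (\<lambda>x. f x + g x)"
| mult: "elementary_smooth f \<Longrightarrow> elementary_smooth g \<Longrightarrow> elementary_smooth (\<lambda>x. f x * g x)"
| inverse: "elementary_smooth f \<Longrightarrow> (\<And>x. f x \<noteq> 0) \<Longrightarrow> elementary_smooth (\<lambda>x. inverse (f x))"
| exp_inv_poly: "elementary_smooth f \<Longrightarrow> elementary_smooth (\<lambda>x. exp_inv_poly P (f x))"

lemma elementary_smooth_has_derivative:
  assumes "elementary_smooth f"
  shows "\<exists>D. (\<forall>x. (f has_derivative D x) (at x)) \<and> (\<forall>v. elementary_smooth (\<lambda>x. D x v))"
  using assms
proof induction
  case (const c)
  show ?case
    by (rule exI[of _ "\<lambda>x v. 0"]) (auto intro: elementary_smooth.const)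
next
  case (linear l)
  show ?case
    by (rule exI[of _ "\<lambda>x. l"])
       (auto intro: elementary_smooth.const linear bounded_linear_imp_has_derivative)
next
  case inner_self
  have "elementary_smooth (\<lambda>x::'a. inner x v + inner v x)" for v
    by (intro elementary_smooth.add elementary_smooth.linear
        bounded_linear_inner_left bounded_linear_inner_right)
  then show ?case
    by (intro exI[of _ "\<lambda>x v. inner x v + inner v x"]) (auto intro!: derivative_eq_intros)
next
  case (add f g)
  then obtain Df Dg where
    "\<forall>x. (f has_derivative Df x) (at x)" "\<forall>v. elementary_smooth (\<lambda>x. Df x v)"
    "\<forall>x. (g has_derivative Dg x) (at x)" "\<forall>v. elementary_smooth (\<lambda>x. Dg x v)" by blast
  then show ?case
    by (intro exI[of _ "\<lambda>x v. Df x v + Dg x v"])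
       (auto intro!: has_derivative_add elementary_smooth.add)
next
  case (mult f g)
  then obtain Df Dg where
    "\<forall>x. (f has_derivative Df x) (at x)" "\<forall>v. elementary_smooth (\<lambda>x. Df x v)"
    "\<forall>x. (g has_derivative Dg x) (at x)" "\<forall>v. elementary_smooth (\<lambda>x. Dg x v)" by blast
  with mult.hyps show ?case
    by (intro exI[of _ "\<lambda>x v. f x * Dg x v + Df x v * g x"])
       (auto intro!: has_derivative_mult elementary_smooth.add elementary_smooth.mult)
next
  case (inverse f)
  then obtain Df where Df:
    "\<forall>x. (f has_derivative Df x) (at x)" "\<forall>v. elementary_smooth (\<lambda>x. Df x v)" by blast
  have "elementary_smooth (\<lambda>x. (-1) * (inverse (f x) * Df x v * inverse (f x)))" for v
    by (intro elementary_smooth.mult elementary_smooth.const elementary_smooth.inverse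
        inverse.hyps Df(2)[rule_format])
  with inverse.hyps(2) Df(1) show ?case
    by (intro exI[of _ "\<lambda>x v. - (inverse (f x) * Df x v * inverse (f x))"])
       (auto intro!: derivative_eq_intros)
next
  case (exp_inv_poly f P)
  then obtain Df where Df:
    "\<forall>x. (f has_derivative Df x) (at x)" "\<forall>v. elementary_smooth (\<lambda>x. Df x v)" by blast
  have "((\<lambda>x. exp_inv_poly P (f x)) has_derivative
      (\<lambda>v. exp_inv_poly (exp_inv_deriv_poly P) (f x) * Df x v)) (at x)" for x
    using has_derivative_compose[OF Df(1)[rule_format]
        exp_inv_poly_has_real_derivative[THEN has_field_derivative_imp_has_derivative]]
    by (simp add: o_def)
  with Df(2) exp_inv_poly.hyps show ?case
    by (intro exI[of _ "\<lambda>x v. exp_inv_poly (exp_inv_deriv_poly P) (f x) * Df x v"])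
       (auto intro!: elementary_smooth.mult elementary_smooth.exp_inv_poly)
qed

lemma elementary_smooth_imp_smooth_fun: "elementary_smooth f \<Longrightarrow> smooth_fun f"
proof (coinduction arbitrary: f rule: smooth_fun.coinduct)
  case (smooth_fun f)
  then show ?case
    using elementary_smooth_has_derivative by blast
qed

definition smooth_step :: "real \<Rightarrow> real" where
  "smooth_step s = exp_inv_poly 1 s * inverse (exp_inv_poly 1 s + exp_inv_poly 1 (1 - s))"

definition smooth_step_deriv :: "real \<Rightarrow> real" where
  "smooth_step_deriv s =
     (exp_inv_poly (exp_inv_deriv_poly 1) s * exp_inv_poly 1 (1 - s)
      + exp_inv_poly 1 s * exp_inv_poly (exp_inv_deriv_poly 1) (1 - s))
     / (exp_inv_poly 1 s + exp_inv_poly 1 (1 - s))\<^sup>2"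

lemma exp_inv_poly_1_pos: "0 < t \<Longrightarrow> 0 < exp_inv_poly 1 t"
  and exp_inv_poly_1_nonneg: "0 \<le> exp_inv_poly 1 t"
  and exp_inv_poly_1_eq_0: "t \<le> 0 \<Longrightarrow> exp_inv_poly 1 t = 0"
  and exp_inv_poly_deriv_1_pos: "0 < t \<Longrightarrow> 0 < exp_inv_poly (exp_inv_deriv_poly 1) t"
  and exp_inv_poly_deriv_1_nonneg: "0 \<le> exp_inv_poly (exp_inv_deriv_poly 1) t"
  by (auto simp: exp_inv_poly_def exp_inv_deriv_poly_def)

lemma smooth_step_denominator_pos: "0 < exp_inv_poly 1 s + exp_inv_poly 1 (1 - s)"
  using exp_inv_poly_1_pos[of s] exp_inv_poly_1_pos[of "1 - s"]
    exp_inv_poly_1_nonneg[of s] exp_inv_poly_1_nonneg[of "1 - s"]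
  by (cases "0 < s") auto

lemma smooth_step_eq_0: "s \<le> 0 \<Longrightarrow> smooth_step s = 0"
  by (simp add: smooth_step_def exp_inv_poly_1_eq_0)

lemma smooth_step_eq_1: "1 \<le> s \<Longrightarrow> smooth_step s = 1"
  using smooth_step_denominator_pos[of s] by (simp add: smooth_step_def exp_inv_poly_1_eq_0)

lemma smooth_step_nonneg: "0 \<le> smooth_step s"
  using smooth_step_denominator_pos[of s] exp_inv_poly_1_nonneg[of s] by (simp add: smooth_step_def)

lemma smooth_step_neq_0_imp_pos: "smooth_step s \<noteq> 0 \<Longrightarrow> 0 < s"
  using smooth_step_eq_0 by (meson not_less)

lemma smooth_step_deriv_nonneg: "0 \<le> smooth_step_deriv s"
  by (simp add: smooth_step_deriv_def exp_inv_poly_1_nonneg exp_inv_poly_deriv_1_nonneg)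

lemma smooth_step_deriv_pos: "0 < s \<Longrightarrow> s < 1 \<Longrightarrow> 0 < smooth_step_deriv s"
  using smooth_step_denominator_pos[of s] exp_inv_poly_1_pos[of s] exp_inv_poly_1_pos[of "1 - s"]
    exp_inv_poly_deriv_1_pos[of s] exp_inv_poly_deriv_1_pos[of "1 - s"]
  by (simp add: smooth_step_deriv_def add_pos_pos)

lemma smooth_step_has_real_derivative: "(smooth_step has_real_derivative smooth_step_deriv s) (at s)"
proof -
  have "((\<lambda>s. exp_inv_poly 1 (1 - s)) has_real_derivative
      exp_inv_poly (exp_inv_deriv_poly 1) (1 - s) * (-1)) (at s)"
    by (rule DERIV_chain2[OF exp_inv_poly_has_real_derivative]) (auto intro!: derivative_eq_intros)
  then show ?thesis
    using smooth_step_denominator_pos[of s] unfolding smooth_step_def[abs_def]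
    by (auto intro!: derivative_eq_intros exp_inv_poly_has_real_derivative
        simp: smooth_step_deriv_def field_simps power2_eq_square)
qed

lemma continuous_on_smooth_step_deriv: "continuous_on UNIV smooth_step_deriv"
proof -
  have cont: "isCont (exp_inv_poly P) x" for P x
    using exp_inv_poly_has_real_derivative by (rule DERIV_isCont)
  have "isCont (\<lambda>s. exp_inv_poly P (1 - s)) x" for P x
    by (rule isCont_o2[OF _ cont]) auto
  then have "isCont smooth_step_deriv x" for x
    using smooth_step_denominator_pos[of x] unfolding smooth_step_deriv_def
    by (auto intro!: continuous_intros cont)
  then show ?thesis
    by (simp add: continuous_at_imp_continuous_on)
qed

lemma elementary_smooth_smooth_step:
  assumes "elementary_smooth g"
  shows "elementary_smooth (\<lambda>x. smooth_step (g x))"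
proof -
  have "elementary_smooth (\<lambda>x. 1 + (-1) * g x)"
    using assms by (intro elementary_smooth.add elementary_smooth.mult elementary_smooth.const)
  then have "elementary_smooth (\<lambda>x. exp_inv_poly 1 (1 - g x))"
    by (auto dest: elementary_smooth.exp_inv_poly)
  moreover have "elementary_smooth (\<lambda>x. exp_inv_poly 1 (g x))"
    using assms by (rule elementary_smooth.exp_inv_poly)
  ultimately show ?thesis
    unfolding smooth_step_def using smooth_step_denominator_pos
    by (intro elementary_smooth.mult elementary_smooth.inverse elementary_smooth.add)
       (auto simp: less_le)
qed

section \<open>The test function\<close>

definition time_cutoff :: "real \<Rightarrow> real \<Rightarrow> real \<Rightarrow> real" where
  "time_cutoff a b t = smooth_step ((b - t) / (b - a)) * smooth_step (t + 1)"

text \<open>The factor \<open>smooth_step (t + 1)\<close> only makes the support compact; it is 1 for \<open>t \<ge> 0\<close>,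
  where \<open>time_cutoff_deriv\<close> is the derivative of \<open>time_cutoff\<close>.\<close>

definition time_cutoff_deriv :: "real \<Rightarrow> real \<Rightarrow> real \<Rightarrow> real" where
  "time_cutoff_deriv a b t = - smooth_step_deriv ((b - t) / (b - a)) / (b - a)"

definition space_cutoff :: "real \<Rightarrow> 'd::real_inner \<Rightarrow> real" where
  "space_cutoff R y = smooth_step (R\<^sup>2 + 1 - inner y y)"

definition cutoff_test :: "real \<Rightarrow> real \<Rightarrow> real \<Rightarrow> real \<times> 'd::real_inner \<Rightarrow> real" where
  "cutoff_test a b R p = time_cutoff a b (fst p) * space_cutoff R (snd p)"

lemma cutoff_test_nonneg: "0 \<le> cutoff_test a b R p"
  by (simp add: cutoff_test_def time_cutoff_def space_cutoff_def smooth_step_nonneg)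

lemma space_cutoff_eq_1: "0 \<le> R \<Longrightarrow> norm y \<le> R \<Longrightarrow> space_cutoff R y = 1"
  unfolding space_cutoff_def
  by (intro smooth_step_eq_1) (simp add: power_mono flip: power2_norm_eq_inner)

lemma elementary_smooth_cutoff_test:
  "elementary_smooth (cutoff_test a b R :: real \<times> 'd::real_inner \<Rightarrow> real)"
proof -
  have "(\<lambda>p::real \<times> 'd. (b - fst p) / (b - a)) = (\<lambda>p. b / (b - a) + (- 1 / (b - a)) * fst p)"
    by (simp add: fun_eq_iff diff_divide_distrib)
  moreover have "elementary_smooth (\<lambda>p::real \<times> 'd. b / (b - a) + (- 1 / (b - a)) * fst p)"
    by (intro elementary_smooth.add elementary_smooth.mult elementary_smooth.const
        elementary_smooth.linear bounded_linear_fst)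
  moreover have "(\<lambda>p::real \<times> 'd. R\<^sup>2 + 1 - inner (snd p) (snd p))
      = (\<lambda>p. (R\<^sup>2 + 1) + ((-1) * inner p p + fst p * fst p))"
    by (simp add: fun_eq_iff inner_prod_def)
  moreover have "elementary_smooth (\<lambda>p::real \<times> 'd. (R\<^sup>2 + 1) + ((-1) * inner p p + fst p * fst p))"
    by (intro elementary_smooth.add elementary_smooth.mult elementary_smooth.const
        elementary_smooth.inner_self elementary_smooth.linear bounded_linear_fst)
  moreover have "elementary_smooth (\<lambda>p::real \<times> 'd. fst p + 1)"
    by (intro elementary_smooth.add elementary_smooth.const elementary_smooth.linear bounded_linear_fst)
  ultimately show ?thesis
    unfolding cutoff_test_def[abs_def] time_cutoff_def space_cutoff_def
    by (metis (no_types) elementary_smooth.mult elementary_smooth_smooth_step)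
qed

lemma cutoff_test_support:
  assumes "a < b" "0 \<le> R" "cutoff_test a b R (p::real \<times> 'd::real_inner) \<noteq> 0"
  shows "p \<in> {-1..b} \<times> cball 0 (R + 1)"
proof -
  have "smooth_step ((b - fst p) / (b - a)) \<noteq> 0" "smooth_step (fst p + 1) \<noteq> 0"
    "smooth_step (R\<^sup>2 + 1 - inner (snd p) (snd p)) \<noteq> 0"
    using assms(3) by (auto simp: cutoff_test_def time_cutoff_def space_cutoff_def)
  then have "0 < (b - fst p) / (b - a)" "0 < fst p + 1" "0 < R\<^sup>2 + 1 - inner (snd p) (snd p)"
    by (metis smooth_step_neq_0_imp_pos)+
  moreover have "R\<^sup>2 + 1 \<le> (R + 1)\<^sup>2"
    using assms(2) by (simp add: power2_eq_square algebra_simps)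
  ultimately have "fst p \<in> {-1..b}" "(norm (snd p))\<^sup>2 < (R + 1)\<^sup>2"
    using assms(1) by (auto simp: zero_less_divide_iff power2_norm_eq_inner)
  then show ?thesis
    using assms(2) by (auto simp: mem_Times_iff dest: power_less_imp_less_base)
qed

lemma test_fn_cutoff_test:
  assumes "a < b" "b < T" "0 \<le> R"
  shows "test_fn T (cutoff_test a b R :: real \<times> 'd::euclidean_space \<Rightarrow> real)"
proof -
  let ?S = "{p::real \<times> 'd. cutoff_test a b R p \<noteq> 0}"
  let ?K = "{-1..b} \<times> cball (0::'d) (R + 1)"
  have K: "compact ?K"
    by (intro compact_Times) auto
  have S: "?S \<subseteq> ?K"
    using cutoff_test_support[OF assms(1,3)] by blast
  then have "bounded ?S"
    using K by (meson bounded_subset compact_imp_bounded)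
  moreover have "closure ?S \<subseteq> ?K"
    using S K by (intro closure_minimal compact_imp_closed)
  moreover have "?K \<subseteq> {p. fst p < T}"
    using assms(2) by auto
  ultimately show ?thesis
    unfolding test_fn_def compact_closure
    using elementary_smooth_imp_smooth_fun[OF elementary_smooth_cutoff_test] cutoff_test_nonneg
    by blast
qed

lemma cutoff_test_has_derivative:
  fixes p :: "real \<times> 'd::euclidean_space"
  assumes "a < b" "0 < fst p" "norm (snd p) < R"
  shows "(cutoff_test a b R has_derivative (\<lambda>h. time_cutoff_deriv a b (fst p) * fst h)) (at p)"
proof -
  let ?W = "{q::real \<times> 'd. 0 < fst q \<and> norm (snd q) < R}"
  have "open ?W"
    by (intro open_Collect_conj open_Collect_less continuous_intros)
  have W: "cutoff_test a b R q = smooth_step ((b - fst q) / (b - a))" if "q \<in> ?W" for q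
  proof -
    have "norm (snd q) < R"
      using that by simp
    then have "space_cutoff R (snd q) = 1"
      using norm_ge_zero[of "snd q"] by (intro space_cutoff_eq_1) linarith+
    then show ?thesis
      using that by (simp add: cutoff_test_def time_cutoff_def smooth_step_eq_1)
  qed
  have "((\<lambda>q. (b - fst q) / (b - a)) has_derivative (\<lambda>h. - fst h / (b - a))) (at p)"
    using assms(1) by (auto intro!: derivative_eq_intros)
  from has_derivative_compose[OF this smooth_step_has_real_derivative[THEN has_field_derivative_imp_has_derivative]]
  have "((\<lambda>q. smooth_step ((b - fst q) / (b - a)))
      has_derivative (\<lambda>h. time_cutoff_deriv a b (fst p) * fst h)) (at p)"
    using assms(1) by (simp add: o_def time_cutoff_deriv_def)
  then show ?thesis
    by (rule has_derivative_transform_within_open[OF _ \<open>open ?W\<close>]) (use assms W in auto)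
qed

lemma time_cutoff_deriv_nonpos: "a < b \<Longrightarrow> time_cutoff_deriv a b t \<le> 0"
  using smooth_step_deriv_nonneg by (simp add: time_cutoff_deriv_def)

lemma time_cutoff_deriv_neg: "a < t \<Longrightarrow> t < b \<Longrightarrow> time_cutoff_deriv a b t < 0"
  by (simp add: time_cutoff_deriv_def smooth_step_deriv_pos field_simps)

lemma continuous_on_time_cutoff_deriv: "a < b \<Longrightarrow> continuous_on UNIV (time_cutoff_deriv a b)"
  unfolding time_cutoff_deriv_def
  by (intro continuous_intros continuous_on_compose2[OF continuous_on_smooth_step_deriv]) auto

lemma levy_measure_sigma_finite:
  fixes \<mu> :: "'d::euclidean_space measure"
  assumes sets: "sets \<mu> = sets borel" and "emeasure \<mu> {0} = 0"
    and finite: "(\<integral>\<^sup>+ z. ennreal (min ((norm z)\<^sup>2) 1) \<partial>\<mu>) < \<infinity>"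
  shows "sigma_finite_measure \<mu>"
proof
  have far: "emeasure \<mu> {z. e \<le> norm z} \<noteq> \<infinity>" if "0 < e" for e
  proof -
    have "e\<^sup>2 \<le> (norm z)\<^sup>2" if "e \<le> norm z" for z :: 'd
      using that \<open>0 < e\<close> by (simp add: power_mono)
    then have pointwise: "ennreal (min (e\<^sup>2) 1) * indicator {z. e \<le> norm z} z \<le> ennreal (min ((norm z)\<^sup>2) 1)"
      for z :: 'd
      by (auto simp: indicator_def min_le_iff_disj intro!: ennreal_leI)
    have "(\<integral>\<^sup>+ z. ennreal (min (e\<^sup>2) 1) * indicator {z. e \<le> norm z} z \<partial>\<mu>) < \<infinity>"
      using le_less_trans[OF nn_integral_mono[OF pointwise] finite] .
    moreover have "{z. e \<le> norm z} \<in> sets \<mu>"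
      unfolding sets by measurable
    moreover have "0 < min (e\<^sup>2) 1"
      using \<open>0 < e\<close> by simp
    ultimately show ?thesis
      by (auto simp: nn_integral_cmult_indicator ennreal_mult_less_top top_unique)
  qed
  let ?A = "insert {0} (range (\<lambda>n::nat. {z::'d. 1 / Suc n \<le> norm z}))"
  have covers: "z \<in> \<Union> ?A" for z :: 'd
  proof (cases "z = 0")
    case False
    then have "0 < norm z"
      by simp
    then obtain n where "inverse (real (Suc n)) < norm z"
      using reals_Archimedean by blast
    then have "z \<in> {z::'d. 1 / Suc n \<le> norm z}"
      by (simp add: divide_inverse)
    then show ?thesis
      by blast
  qed simp
  show "\<exists>A. countable A \<and> A \<subseteq> sets \<mu> \<and> \<Union> A = space \<mu> \<and> (\<forall>a\<in>A. emeasure \<mu> a \<noteq> \<infinity>)"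
  proof (intro exI[of _ ?A] conjI)
    show "countable ?A" by simp
    show "?A \<subseteq> sets \<mu>" unfolding sets by auto
    show "\<Union> ?A = space \<mu>"
      using covers sets_eq_imp_space_eq[OF sets] by auto
    show "\<forall>a\<in>?A. emeasure \<mu> a \<noteq> \<infinity>"
      using assms(2) far by auto
  qed
qed

lemma AE_lebesgue_AE_translate:
  fixes \<mu> :: "'d::euclidean_space measure" and P :: "real \<times> 'd \<Rightarrow> bool"
  assumes sets: "sets \<mu> = sets borel" and "sigma_finite_measure \<mu>"
    and P: "{p. P p} \<in> sets borel" "AE p in lebesgue. P p"
  shows "AE p in lebesgue. AE z in \<mu>. P (fst p, snd p + z)"
proof -
  interpret pair_sigma_finite lborel \<mu>
    by (intro pair_sigma_finite.intro assms lborel.sigma_finite_measure_axioms)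
  define N where "N = {p. \<not> P p}"
  have N: "N \<in> sets borel" "N \<in> null_sets lborel"
    using P by (auto simp: N_def AE_iff_null_sets AE_completion_iff Collect_neg_eq intro: borel_comp)
  let ?g = "\<lambda>w::(real \<times> 'd) \<times> 'd. (fst (fst w), snd (fst w) + snd w)"
  have "{w \<in> space (lborel \<Otimes>\<^sub>M \<mu>). ?g w \<notin> N} \<in> sets (lborel \<Otimes>\<^sub>M \<mu>)"
  proof -
    have "sets (lborel \<Otimes>\<^sub>M \<mu>) = sets (borel \<Otimes>\<^sub>M borel :: ((real \<times> 'd) \<times> 'd) measure)"
      using sets by (intro sets_pair_measure_cong) auto
    moreover have "?g \<in> borel_measurable borel"
      by (intro borel_measurable_continuous_onI continuous_intros)
    then have "?g -` (- N) \<in> sets (borel :: ((real \<times> 'd) \<times> 'd) measure)"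
      using measurable_sets[of ?g borel borel "- N"] N(1) by (auto simp: Compl_eq_Diff_UNIV)
    ultimately show ?thesis
      unfolding borel_prod by (simp add: space_pair_measure sets_eq_imp_space_eq[OF sets] vimage_def)
  qed
  moreover have "AE p in lborel. (fst p, snd p + z) \<notin> N" for z
  proof (rule AE_I')
    have shift: "(+) (0::real, z) \<in> borel_measurable borel"
      by (rule borel_measurable_continuous_onI) (intro continuous_intros)
    have "emeasure lborel ((+) (0, z) -` N) = emeasure (distr lborel borel ((+) (0, z))) N"
      using N(1) shift by (subst emeasure_distr) auto
    also have "\<dots> = 0"
      using N(2) by (simp add: lborel_distr_plus null_setsD1)
    finally show "(+) (0, z) -` N \<in> null_sets lborel"
      using measurable_sets[OF shift N(1)] by (simp add: null_sets_def)
    show "{p \<in> space lborel. \<not> (fst p, snd p + z) \<notin> N} \<subseteq> (+) (0, z) -` N"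
      by (auto simp: add.commute)
  qed
  ultimately have "AE p in lborel. AE z in \<mu>. (fst p, snd p + z) \<notin> N"
    using AE_commute[where P="\<lambda>p z. (fst p, snd p + z) \<notin> N"] by simp
  then show ?thesis
    unfolding N_def by (auto intro: AE_completion)
qed

section \<open>The terms of the entropy inequality\<close>

lemma ppart_nonneg: "0 \<le> ppart pos x"
  by (simp add: ppart_def)

lemma ppart_le_abs: "ppart pos x \<le> \<bar>x\<bar>"
  by (cases pos) (auto simp: ppart_def)

lemma ppart_eq_0_iff: "ppart pos x = 0 \<longleftrightarrow> (if pos then x \<le> 0 else 0 \<le> x)"
  by (cases pos) (auto simp: ppart_def max_def)

lemma borel_measurable_ppart [measurable]:
  "g \<in> borel_measurable M \<Longrightarrow> (\<lambda>x. ppart pos (g x)) \<in> borel_measurable M"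
  unfolding ppart_def by (cases pos) simp_all

lemma ppart_mono_diff_eq_0:
  assumes "mono b" "ppart pos (v - k) = 0"
  shows "ppart pos (b v - b k) = 0"
  using assms monoD[OF assms(1), of v k] monoD[OF assms(1), of k v]
  by (cases pos) (auto simp: ppart_eq_0_iff)

lemma sgnpm_times_mono_diff_nonpos:
  assumes "mono b" "ppart pos (w - k) = 0"
  shows "sgnpm pos (v - k) * (b w - b v) \<le> 0"
  using assms monoD[OF assms(1), of w v] monoD[OF assms(1), of v w]
  by (cases pos) (auto simp: ppart_eq_0_iff sgnpm_def)

lemma Lge_times_sgnpm_nonpos:
  fixes \<mu> :: "'d::euclidean_space measure"
  assumes "mono b" "AE z in \<mu>. r \<le> norm z \<longrightarrow> ppart pos (v (x + z) - k) = 0"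
  shows "Lge \<mu> r (\<lambda>y. b (v y)) x * sgnpm pos (v x - k) \<le> 0"
proof -
  let ?F = "\<lambda>z. indicator {z. r \<le> norm z} z *\<^sub>R (b (v (x + z)) - b (v x))"
  have "AE z in \<mu>. 0 \<le> - (?F z * sgnpm pos (v x - k))"
    using assms(2)
  proof eventually_elim
    case (elim z)
    then show ?case
      using sgnpm_times_mono_diff_nonpos[OF assms(1), of pos "v (x + z)" k "v x"]
      by (auto simp: indicator_def mult.commute)
  qed
  then have "0 \<le> integral\<^sup>L \<mu> (\<lambda>z. - (?F z * sgnpm pos (v x - k)))"
    by (rule integral_nonneg_AE)
  then show ?thesis
    by (simp add: Lge_def set_lebesgue_integral_def)
qed

lemma Llt_eq_0_if_locally_constant:
  assumes "\<And>z. norm z < r \<Longrightarrow> g (x + z) = g x"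
  shows "Llt \<mu> r g x = 0"
proof -
  have "(LINT z:{z. \<epsilon> < norm z \<and> norm z < r}|\<mu>. g (x + z) - g x) = 0" for \<epsilon>
    unfolding set_lebesgue_integral_def
    by (rule integral_eq_zero_AE) (auto simp: indicator_def assms)
  then show ?thesis
    unfolding Llt_def by (simp add: tendsto_Lim)
qed

lemma open_cylQ:
  assumes "open \<Omega>"
  shows "open (cylQ T \<Omega>)"
proof -
  have "cylQ T \<Omega> = {0<..<T} \<times> \<Omega>"
    by (auto simp: cylQ_def)
  then show ?thesis
    using assms by (simp add: open_Times)
qed

lemma cylQc_borel:
  assumes "open \<Omega>"
  shows "cylQc T \<Omega> \<in> sets borel"
proof -
  have "cylQc T \<Omega> = {0<..<T} \<times> - \<Omega>"
    by (auto simp: cylQc_def)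
  then show ?thesis
    using assms by (simp add: borel_Times)
qed

lemma nonlocal_far_term_nonpos:
  fixes \<Omega> :: "'d::euclidean_space set" and \<mu> :: "'d measure" and u :: "real \<times> 'd \<Rightarrow> real"
  assumes \<Omega>: "open \<Omega>" "\<Omega> \<subseteq> ball 0 R0" and r: "2 * R0 \<le> r" and b: "mono b"
    and u: "u \<in> borel_measurable borel"
    and \<mu>: "sets \<mu> = sets borel" "sigma_finite_measure \<mu>"
    and exterior: "AE p in lebesgue. p \<in> cylQc T \<Omega> \<longrightarrow> ppart pos (u p - k) = 0"
    and \<phi>: "\<And>p. 0 \<le> \<phi> p"
  shows "(LINT p:cylQ T \<Omega>|lebesgue.
            Lge \<mu> r (\<lambda>y. b (u (fst p, y))) (snd p) * sgnpm pos (u p - k) * \<phi> p) \<le> 0"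
proof -
  have "{p. p \<in> cylQc T \<Omega> \<longrightarrow> ppart pos (u p - k) = 0} \<in> sets borel"
    using cylQc_borel[OF \<Omega>(1)] u by measurable
  from AE_lebesgue_AE_translate[OF \<mu> this exterior]
  have "AE p in lebesgue. p \<in> cylQ T \<Omega> \<longrightarrow>
      Lge \<mu> r (\<lambda>y. b (u (fst p, y))) (snd p) * sgnpm pos (u p - k) \<le> 0"
  proof eventually_elim
    case (elim p)
    show ?case
    proof
      assume p: "p \<in> cylQ T \<Omega>"
      then have "norm (snd p) < R0"
        using \<Omega>(2) by (auto simp: cylQ_def)
      then have outside: "snd p + z \<notin> \<Omega>" if "r \<le> norm z" for z
        using that r \<Omega>(2) norm_triangle_ineq2[of z "- snd p"] by (force simp: add.commute)
      have "AE z in \<mu>. r \<le> norm z \<longrightarrow> ppart pos (u (fst p, snd p + z) - k) = 0"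
        using elim by eventually_elim (use p outside in \<open>auto simp: cylQ_def cylQc_def\<close>)
      from Lge_times_sgnpm_nonpos[OF b this]
      show "Lge \<mu> r (\<lambda>y. b (u (fst p, y))) (snd p) * sgnpm pos (u p - k) \<le> 0"
        by simp
    qed
  qed
  then have "AE p in lebesgue. 0 \<le> - (indicator (cylQ T \<Omega>) p *\<^sub>R
      (Lge \<mu> r (\<lambda>y. b (u (fst p, y))) (snd p) * sgnpm pos (u p - k) * \<phi> p))"
    by eventually_elim (auto simp: indicator_def mult_nonpos_nonneg \<phi>)
  then show ?thesis
    unfolding set_lebesgue_integral_def using integral_nonneg_AE by fastforce
qed

lemma nonlocal_near_term_eq_0:
  fixes \<Omega> :: "'d::euclidean_space set" and u :: "real \<times> 'd \<Rightarrow> real"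
  assumes \<Omega>: "\<Omega> \<subseteq> ball 0 R0" and R: "R0 + r \<le> R" and b: "mono b"
    and exterior: "AE p in lebesgue. p \<in> cylQc T \<Omega> \<longrightarrow> ppart pos (u p - k) = 0"
  shows "(LINT p:cylM T|lebesgue.
            ppart pos (b (u p) - b k) * Llt \<mu> r (\<lambda>y. cutoff_test a c R (fst p, y)) (snd p)) = 0"
  unfolding set_lebesgue_integral_def
proof (rule integral_eq_zero_AE)
  show "AE p in lebesgue. indicator (cylM T) p *\<^sub>R
      (ppart pos (b (u p) - b k) * Llt \<mu> r (\<lambda>y. cutoff_test a c R (fst p, y)) (snd p)) = 0"
    using exterior
  proof eventually_elim
    case (elim p)
    show ?case
    proof (cases "snd p \<in> \<Omega>")
      case True
      then have x: "norm (snd p) < R0"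
        using \<Omega> by auto
      have "space_cutoff R (snd p + z) = space_cutoff R (snd p)" if "norm z < r" for z
      proof -
        have "norm (snd p + z) \<le> R" "norm (snd p) \<le> R" "0 \<le> R"
          using x that R norm_triangle_ineq[of "snd p" z] norm_ge_zero[of z] norm_ge_zero[of "snd p"]
          by linarith+
        then show ?thesis
          by (simp add: space_cutoff_eq_1)
      qed
      then have "Llt \<mu> r (\<lambda>y. cutoff_test a c R (fst p, y)) (snd p) = 0"
        by (intro Llt_eq_0_if_locally_constant) (simp add: cutoff_test_def)
      then show ?thesis
        by simp
    next
      case False
      then show ?thesis
        using elim ppart_mono_diff_eq_0[OF b]
        by (auto simp: indicator_def cylM_def cylQc_def)
    qed
  qed
qed

lemma integrable_cylQ_ppart_times:
  fixes \<Omega> :: "'d::euclidean_space set" and u :: "real \<times> 'd \<Rightarrow> real"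
  assumes \<Omega>: "open \<Omega>" "bounded \<Omega>" and u: "u \<in> borel_measurable borel"
    and C: "AE p in lebesgue. p \<in> cylM T \<longrightarrow> \<bar>u p\<bar> \<le> C" and g: "continuous_on UNIV g"
  shows "integrable lebesgue (\<lambda>p. indicator (cylQ T \<Omega>) p * (ppart pos (u p - k) * g (fst p)))"
proof -
  obtain B where B: "\<And>t. t \<in> {0..T} \<Longrightarrow> \<bar>g t\<bar> \<le> B"
    using compact_imp_bounded[OF compact_continuous_image[OF continuous_on_subset[OF g]]]
    by (fastforce simp: bounded_iff)
  have Q: "cylQ T \<Omega> \<in> sets borel"
    using open_cylQ[OF \<Omega>(1)] by simp
  have "cylQ T \<Omega> \<subseteq> {0..T} \<times> \<Omega>"
    by (auto simp: cylQ_def)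
  then have "bounded (cylQ T \<Omega>)"
    using bounded_subset[OF bounded_Times[OF bounded_closed_interval \<Omega>(2)]] by blast
  then have "emeasure lebesgue (cylQ T \<Omega>) < \<infinity>"
    using Q emeasure_bounded_finite by auto
  moreover have "(\<lambda>p. indicator (cylQ T \<Omega>) p * (ppart pos (u p - k) * g (fst p))) \<in> borel_measurable lebesgue"
  proof -
    have "(\<lambda>p::real \<times> 'd. g (fst p)) \<in> borel_measurable borel"
      by (intro borel_measurable_continuous_onI continuous_on_compose2[OF g] continuous_intros) auto
    then show ?thesis
      using Q u by (intro measurable_completion borel_measurable_times borel_measurable_indicator
          borel_measurable_ppart) auto
  qed
  moreover have "AE p in lebesgue. p \<in> cylQ T \<Omega> \<longrightarrow>
      norm (indicator (cylQ T \<Omega>) p * (ppart pos (u p - k) * g (fst p))) \<le> (C + \<bar>k\<bar>) * B"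
    using C
  proof eventually_elim
    case (elim p)
    show ?case
    proof
      assume p: "p \<in> cylQ T \<Omega>"
      then have "ppart pos (u p - k) \<le> C + \<bar>k\<bar>" "\<bar>g (fst p)\<bar> \<le> B"
        using elim ppart_le_abs[of pos "u p - k"] B[of "fst p"] by (auto simp: cylM_def cylQ_def)
      then show "norm (indicator (cylQ T \<Omega>) p * (ppart pos (u p - k) * g (fst p))) \<le> (C + \<bar>k\<bar>) * B"
        using p ppart_nonneg[of pos "u p - k"] by (simp add: abs_mult mult_mono)
    qed
  qed
  ultimately show ?thesis
    using Q by (intro integrableI_bounded_set[where A="cylQ T \<Omega>"]) auto
qed

lemma transport_term_cutoff_test:
  fixes \<Omega> :: "'d::euclidean_space set" and u :: "real \<times> 'd \<Rightarrow> real" and F :: "real \<times> 'd \<Rightarrow> 'd"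
  assumes "a < b" "\<Omega> \<subseteq> ball 0 R"
  shows "(LINT p:cylQ T \<Omega>|lebesgue.
            ppart pos (u p - k) * frechet_derivative (cutoff_test a b R) (at p) (1, 0)
          + frechet_derivative (cutoff_test a b R) (at p) (0, F p))
       = integral\<^sup>L lebesgue (\<lambda>p. indicator (cylQ T \<Omega>) p * (ppart pos (u p - k) * time_cutoff_deriv a b (fst p)))"
  unfolding set_lebesgue_integral_def
proof (rule Bochner_Integration.integral_cong[OF refl])
  fix p :: "real \<times> 'd"
  have "frechet_derivative (cutoff_test a b R) (at p) = (\<lambda>h. time_cutoff_deriv a b (fst p) * fst h)"
    if "p \<in> cylQ T \<Omega>"
    using that assms by (intro frechet_derivative_at[symmetric] cutoff_test_has_derivative)
      (auto simp: cylQ_def)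
  then show "indicator (cylQ T \<Omega>) p *\<^sub>R
      (ppart pos (u p - k) * frechet_derivative (cutoff_test a b R) (at p) (1, 0)
       + frechet_derivative (cutoff_test a b R) (at p) (0, F p))
    = indicator (cylQ T \<Omega>) p * (ppart pos (u p - k) * time_cutoff_deriv a b (fst p))"
    by (cases "p \<in> cylQ T \<Omega>") simp_all
qed

lemma entropy_solution_transport_term_nonneg:
  fixes \<Omega> :: "'d::euclidean_space set" and T :: real
    and f :: "real \<Rightarrow> 'd" and b :: "real \<Rightarrow> real" and \<mu> :: "'d measure"
    and uc :: "real \<times> 'd \<Rightarrow> real" and u0 :: "'d \<Rightarrow> real" and Lf :: real
    and u :: "real \<times> 'd \<Rightarrow> real"
  assumes \<Omega>: "open \<Omega>" "bounded \<Omega>" and b: "mono b"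
    and \<mu>: "sets \<mu> = sets borel" "sigma_finite_measure \<mu>"
    and sol: "entropy_solution \<Omega> T f b \<mu> uc u0 Lf u"
    and initial: "AE x in lebesgue. x \<in> \<Omega> \<longrightarrow> ppart pos (u0 x - k) = 0"
    and exterior: "AE p in lebesgue. p \<in> cylQc T \<Omega> \<longrightarrow> ppart pos (uc p - k) = 0"
    and boundary: "\<And>t x. 0 < t \<Longrightarrow> t < T \<Longrightarrow> x \<in> frontier \<Omega> \<Longrightarrow> ppart pos (uc (t, x) - k) = 0"
    and s: "s1 < s2" "s2 < T"
  shows "0 \<le> integral\<^sup>L lebesgue
            (\<lambda>p. indicator (cylQ T \<Omega>) p * (ppart pos (u p - k) * time_cutoff_deriv s1 s2 (fst p)))"
proof -
  obtain R0 where R0: "0 < R0" "\<Omega> \<subseteq> ball 0 R0"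
    using \<Omega>(2) bounded_subset_ballD by blast
  \<comment> \<open>Jumps of length at least \<open>2 * R0\<close> leave \<open>\<Omega>\<close>, and the space cutoff is 1 on the
    \<open>2 * R0\<close>-neighbourhood of \<open>\<Omega>\<close>.\<close>
  define \<phi> where "\<phi> = (cutoff_test s1 s2 (3 * R0) :: real \<times> 'd \<Rightarrow> real)"
  have u: "u \<in> borel_measurable borel"
    and u_exterior: "AE p in lebesgue. p \<in> cylQc T \<Omega> \<longrightarrow> u p = uc p"
    using sol unfolding entropy_solution_def by blast+
  have exterior_u: "AE p in lebesgue. p \<in> cylQc T \<Omega> \<longrightarrow> ppart pos (u p - k) = 0"
    using exterior u_exterior by eventually_elim auto
  have admissible: "AE p in lebesgue. p \<in> cylQc T \<Omega> \<longrightarrow> ppart pos (b (uc p) - b k) * \<phi> p = 0"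
    using exterior by eventually_elim (auto simp: ppart_mono_diff_eq_0[OF b])
  have "- (LINT p:cylQ T \<Omega>|lebesgue.
              ppart pos (u p - k) * frechet_derivative \<phi> (at p) (1, 0)
            + frechet_derivative \<phi> (at p) (0, Fpm pos f (u p) k))
        - (LINT p:cylQ T \<Omega>|lebesgue.
              Lge \<mu> (2 * R0) (\<lambda>y. b (u (fst p, y))) (snd p) * sgnpm pos (u p - k) * \<phi> p)
        - (LINT p:cylM T|lebesgue.
              ppart pos (b (u p) - b k) * Llt \<mu> (2 * R0) (\<lambda>y. \<phi> (fst p, y)) (snd p))
        \<le> (LINT x:\<Omega>|lebesgue. ppart pos (u0 x - k) * \<phi> (0, x))
          + Lf * (LINT t:{0<..<T}|lborel.
                    (LINT x|surface_measure \<Omega>. ppart pos (uc (t, x) - k) * \<phi> (t, x)))"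
    (is "- ?transport - ?far - ?near \<le> ?initial + Lf * ?boundary")
    using R0(1) test_fn_cutoff_test[OF s, of "3 * R0"] admissible unfolding \<phi>_def
    by (intro sol[unfolded entropy_solution_def, THEN conjunct2, THEN conjunct2, THEN conjunct1,
          rule_format] conjI) auto
  moreover have "?initial = 0"
    unfolding set_lebesgue_integral_def
    by (rule integral_eq_zero_AE, use initial in eventually_elim) (auto simp: indicator_def)
  moreover have "?boundary = 0"
  proof -
    have "(LINT x|surface_measure \<Omega>. ppart pos (uc (t, x) - k) * \<phi> (t, x)) = 0"
      if "t \<in> {0<..<T}" for t
      using that boundary
      by (intro integral_eq_zero_AE AE_I2) (simp add: surface_measure_def space_measure_of_conv)
    then show ?thesis
      unfolding set_lebesgue_integral_def
      by (intro integral_eq_zero_AE AE_I2) (simp add: indicator_def)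
  qed
  moreover have "?near = 0"
    unfolding \<phi>_def using R0 b exterior_u by (intro nonlocal_near_term_eq_0) auto
  moreover have "?far \<le> 0"
    unfolding \<phi>_def using R0 \<Omega>(1) b u \<mu> exterior_u cutoff_test_nonneg
    by (intro nonlocal_far_term_nonpos) auto
  moreover have "?transport = integral\<^sup>L lebesgue
      (\<lambda>p. indicator (cylQ T \<Omega>) p * (ppart pos (u p - k) * time_cutoff_deriv s1 s2 (fst p)))"
    unfolding \<phi>_def using s R0 by (intro transport_term_cutoff_test) auto
  ultimately show ?thesis
    by simp
qed

lemma entropy_solution_ppart_eq_0_on_slab:
  fixes \<Omega> :: "'d::euclidean_space set" and T :: real
    and f :: "real \<Rightarrow> 'd" and b :: "real \<Rightarrow> real" and \<mu> :: "'d measure"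
    and uc :: "real \<times> 'd \<Rightarrow> real" and u0 :: "'d \<Rightarrow> real" and Lf :: real
    and u :: "real \<times> 'd \<Rightarrow> real"
  assumes \<Omega>: "open \<Omega>" "bounded \<Omega>" and b: "mono b"
    and \<mu>: "sets \<mu> = sets borel" "sigma_finite_measure \<mu>"
    and sol: "entropy_solution \<Omega> T f b \<mu> uc u0 Lf u"
    and initial: "AE x in lebesgue. x \<in> \<Omega> \<longrightarrow> ppart pos (u0 x - k) = 0"
    and exterior: "AE p in lebesgue. p \<in> cylQc T \<Omega> \<longrightarrow> ppart pos (uc p - k) = 0"
    and boundary: "\<And>t x. 0 < t \<Longrightarrow> t < T \<Longrightarrow> x \<in> frontier \<Omega> \<Longrightarrow> ppart pos (uc (t, x) - k) = 0"
    and s: "s1 < s2" "s2 < T"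
  shows "AE p in lebesgue. p \<in> cylQ T \<Omega> \<longrightarrow> s1 < fst p \<longrightarrow> fst p < s2 \<longrightarrow> ppart pos (u p - k) = 0"
proof -
  define G where "G p = indicator (cylQ T \<Omega>) p * (ppart pos (u p - k) * time_cutoff_deriv s1 s2 (fst p))"
    for p
  obtain C where u: "u \<in> borel_measurable borel" "AE p in lebesgue. p \<in> cylM T \<longrightarrow> \<bar>u p\<bar> \<le> C"
    using sol unfolding entropy_solution_def by blast
  have G_nonpos: "G p \<le> 0" for p
    unfolding G_def using time_cutoff_deriv_nonpos[OF s(1)]
    by (intro mult_nonneg_nonpos ppart_nonneg) auto
  have "integrable lebesgue G"
    unfolding G_def[abs_def] using \<Omega> u continuous_on_time_cutoff_deriv[OF s(1)]
    by (rule integrable_cylQ_ppart_times)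
  moreover have "0 \<le> integral\<^sup>L lebesgue G"
    unfolding G_def[abs_def]
    by (rule entropy_solution_transport_term_nonneg[OF \<Omega> b \<mu> sol initial exterior boundary s])
  moreover have "0 \<le> integral\<^sup>L lebesgue (\<lambda>p. - G p)"
    using G_nonpos by (intro integral_nonneg_AE) simp
  ultimately have "AE p in lebesgue. - G p = 0"
    using G_nonpos by (subst integral_nonneg_eq_0_iff_AE[symmetric]) auto
  then show ?thesis
    by eventually_elim (auto simp: G_def dest: time_cutoff_deriv_neg)
qed

section \<open>Comparison with constant states\<close>

lemma C2_boundary_exterior_near:
  fixes \<Omega> :: "'d::euclidean_space set"
  assumes "open \<Omega>" "C2_boundary \<Omega>" "x \<in> frontier \<Omega>" "open B" "x \<in> B"
  shows "\<exists>W. open W \<and> W \<noteq> {} \<and> W \<subseteq> B \<and> W \<inter> \<Omega> = {}"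
proof -
  obtain U \<rho> where U: "open U" "x \<in> U" "C2_on U \<rho>" "\<forall>y\<in>U. y \<in> \<Omega> \<longleftrightarrow> \<rho> y < 0"
    and nondegenerate: "frechet_derivative \<rho> (at x) \<noteq> (\<lambda>h. 0)"
    using assms(2,3) unfolding C2_boundary_def by blast
  obtain D :: "'d \<Rightarrow> ('d \<Rightarrow>\<^sub>L real)" where D: "\<forall>y\<in>U. (\<rho> has_derivative blinfun_apply (D y)) (at y)"
    using U(3) unfolding C2_on_def by blast
  have "x \<notin> \<Omega>"
    using assms(1,3) by (simp add: frontier_def interior_open)
  then have "0 \<le> \<rho> x"
    using U(2,4) by force
  have "\<exists>y\<in>U \<inter> B. 0 < \<rho> y"
  proof (rule ccontr)
    assume "\<not> (\<exists>y\<in>U \<inter> B. 0 < \<rho> y)"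
    then have "\<forall>y\<in>U \<inter> B. \<rho> y \<le> \<rho> x"
      using \<open>0 \<le> \<rho> x\<close> by force
    then have "blinfun_apply (D x) = (\<lambda>v. 0)"
      using differential_zero_maxmin[OF _ _ D[rule_format, OF U(2)]] U(1,2) assms(4,5) by blast
    then show False
      using nondegenerate frechet_derivative_at[OF D[rule_format, OF U(2)]] by simp
  qed
  moreover have "open (\<rho> -` {0<..} \<inter> (U \<inter> B))"
    using D U(1) assms(4)
    by (intro continuous_on_open_vimage[THEN iffD1, rule_format])
       (auto intro!: continuous_at_imp_continuous_on has_derivative_continuous)
  ultimately show ?thesis
    using U(4) by (intro exI[of _ "\<rho> -` {0<..} \<inter> (U \<inter> B)"]) auto
qed

lemma lateral_boundary_exterior_near:
  fixes \<Omega> :: "'d::euclidean_space set"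
  assumes "open \<Omega>" "C2_boundary \<Omega>" "0 < t" "t < T" "x \<in> frontier \<Omega>" "open V" "(t, x) \<in> V"
  shows "\<exists>W. open W \<and> W \<noteq> {} \<and> W \<subseteq> V \<and> W \<subseteq> cylQc T \<Omega>"
proof -
  obtain A B where AB: "open A" "open B" "(t, x) \<in> A \<times> B" "A \<times> B \<subseteq> V"
    using open_prod_elim[OF assms(6,7)] by metis
  obtain W where W: "open W" "W \<noteq> {}" "W \<subseteq> B" "W \<inter> \<Omega> = {}"
    using C2_boundary_exterior_near[OF assms(1,2,5) AB(2)] AB(3) by auto
  have "open ((A \<inter> {0<..<T}) \<times> W)"
    using AB(1) W(1) by (intro open_Times open_Int) auto
  then show ?thesis
    using AB W assms(3,4)
    by (intro exI[of _ "(A \<inter> {0<..<T}) \<times> W"]) (auto simp: cylQc_def)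
qed

lemma continuous_le_if_AE_le_near:
  fixes g :: "'a::euclidean_space \<Rightarrow> real"
  assumes g: "continuous_on UNIV g" and le: "AE y in lebesgue. y \<in> S \<longrightarrow> g y \<le> c"
    and near: "\<And>V. open V \<Longrightarrow> p \<in> V \<Longrightarrow> \<exists>W. open W \<and> W \<noteq> {} \<and> W \<subseteq> V \<and> W \<subseteq> S"
  shows "g p \<le> c"
proof (rule ccontr)
  assume "\<not> g p \<le> c"
  then have "p \<in> g -` {c<..}"
    by simp
  moreover have "open (g -` {c<..})"
    using g by (simp add: continuous_on_open_vimage[of UNIV, simplified])
  ultimately obtain W where W: "open W" "W \<noteq> {}" "W \<subseteq> g -` {c<..}" "W \<subseteq> S"
    using near by blast
  have "AE y in lebesgue. y \<notin> W"
    using le by eventually_elim (use W in force)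
  then have "negligible W"
    using W(1) by (simp add: negligible_iff_null_sets AE_iff_null_sets borel_open Collect_mem_eq)
  then show False
    using open_not_negligible[OF W(1,2)] by contradiction
qed

lemma AE_le_if_ess_sup_on_less:
  assumes "ess_sup_on A g < ereal q"
  shows "AE x in lebesgue. x \<in> A \<longrightarrow> g x \<le> q"
proof -
  obtain z where z: "AE x in lebesgue. x \<in> A \<longrightarrow> ereal (g x) \<le> z" "z < ereal q"
    using assms unfolding ess_sup_on_def Inf_less_iff by blast
  from z(1) show ?thesis
    by eventually_elim (use z(2) in \<open>metis ereal_less_eq(3) less_imp_le order_trans\<close>)
qed

lemma AE_ge_if_less_ess_inf_on:
  assumes "ereal q < ess_inf_on A g"
  shows "AE x in lebesgue. x \<in> A \<longrightarrow> q \<le> g x"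
proof -
  obtain z where z: "AE x in lebesgue. x \<in> A \<longrightarrow> z \<le> ereal (g x)" "ereal q < z"
    using assms unfolding ess_inf_on_def less_Sup_iff by blast
  from z(1) show ?thesis
    by eventually_elim (use z(2) in \<open>metis ereal_less_eq(3) less_imp_le order_trans\<close>)
qed

lemma AE_ereal_le_if_AE_le_rat:
  assumes "\<And>q::rat. M < ereal (of_rat q) \<Longrightarrow> AE x in N. P x \<longrightarrow> g x \<le> of_rat q"
  shows "AE x in N. P x \<longrightarrow> ereal (g x) \<le> M"
proof -
  have "AE x in N. \<forall>q::rat. M < ereal (of_rat q) \<longrightarrow> P x \<longrightarrow> g x \<le> of_rat q"
    using assms by (auto simp: AE_all_countable intro: AE_I2)
  then show ?thesis
  proof eventually_elim
    case (elim x)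
    show ?case
    proof (intro impI, rule ccontr)
      assume "P x" "\<not> ereal (g x) \<le> M"
      then have "M < ereal (g x)"
        by simp
      then obtain z where z: "M < ereal z" "ereal z < ereal (g x)"
        using ereal_dense2 by blast
      then have "z < g x"
        by simp
      then obtain q where q: "z < of_rat q" "of_rat q < g x"
        using of_rat_dense by blast
      have "M < ereal (of_rat q)"
        using z(1) q(1) less_trans[of M "ereal z" "ereal (of_rat q)"] by simp
      then show False
        using elim \<open>P x\<close> q(2) by auto
    qed
  qed
qed

lemma AE_ereal_ge_if_AE_ge_rat:
  assumes "\<And>q::rat. ereal (of_rat q) < M \<Longrightarrow> AE x in N. P x \<longrightarrow> of_rat q \<le> g x"
  shows "AE x in N. P x \<longrightarrow> M \<le> ereal (g x)"
proof -
  have "AE x in N. P x \<longrightarrow> ereal (- g x) \<le> - M"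
  proof (rule AE_ereal_le_if_AE_le_rat)
    fix q :: rat
    assume "- M < ereal (of_rat q)"
    then have "ereal (of_rat (- q)) < M"
      by (metis ereal_uminus_less_reorder of_rat_minus uminus_ereal.simps(1))
    then show "AE x in N. P x \<longrightarrow> - g x \<le> of_rat q"
      using assms[of "- q"] by (auto simp: of_rat_minus elim: AE_mp intro: AE_I2)
  qed
  then show ?thesis
    by (simp add: ereal_minus_le_minus flip: uminus_ereal.simps(1))
qed

lemma entropy_solution_comparison:
  fixes \<Omega> :: "'d::euclidean_space set" and T :: real
    and f :: "real \<Rightarrow> 'd" and b :: "real \<Rightarrow> real" and \<mu> :: "'d measure"
    and uc :: "real \<times> 'd \<Rightarrow> real" and u0 :: "'d \<Rightarrow> real" and Lf :: real
    and u :: "real \<times> 'd \<Rightarrow> real"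
  assumes \<Omega>: "open \<Omega>" "bounded \<Omega>" "C2_boundary \<Omega>" and b: "mono b"
    and \<mu>: "sets \<mu> = sets borel" "sigma_finite_measure \<mu>"
    and uc: "continuous_on UNIV uc"
    and sol: "entropy_solution \<Omega> T f b \<mu> uc u0 Lf u"
    and initial: "AE x in lebesgue. x \<in> \<Omega> \<longrightarrow> ppart pos (u0 x - k) = 0"
    and exterior: "AE p in lebesgue. p \<in> cylQc T \<Omega> \<longrightarrow> ppart pos (uc p - k) = 0"
  shows "AE p in lebesgue. p \<in> cylQ T \<Omega> \<longrightarrow> ppart pos (u p - k) = 0"
proof -
  have "continuous_on UNIV (\<lambda>p. ppart pos (uc p - k))"
    unfolding ppart_def by (cases pos) (auto intro!: continuous_intros uc)
  moreover have "AE p in lebesgue. p \<in> cylQc T \<Omega> \<longrightarrow> ppart pos (uc p - k) \<le> 0"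
    using exterior by eventually_elim simp
  ultimately have "ppart pos (uc (t, x) - k) \<le> 0" if "0 < t" "t < T" "x \<in> frontier \<Omega>" for t x
    using lateral_boundary_exterior_near[OF \<Omega>(1,3) that]
    by (rule continuous_le_if_AE_le_near)
  then have boundary: "ppart pos (uc (t, x) - k) = 0" if "0 < t" "t < T" "x \<in> frontier \<Omega>" for t x
    using that ppart_nonneg by (meson antisym)
  have "AE p in lebesgue. \<forall>a c::rat. of_rat a < (of_rat c :: real) \<and> of_rat c < T \<longrightarrow>
      p \<in> cylQ T \<Omega> \<longrightarrow> of_rat a < fst p \<longrightarrow> fst p < of_rat c \<longrightarrow> ppart pos (u p - k) = 0"
    using entropy_solution_ppart_eq_0_on_slab[OF \<Omega>(1,2) b \<mu> sol initial exterior boundary]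
    by (auto simp: AE_all_countable intro: AE_I2)
  then show ?thesis
  proof eventually_elim
    case (elim p)
    show ?case
    proof
      assume p: "p \<in> cylQ T \<Omega>"
      then obtain a c :: rat where "of_rat a < fst p" "fst p < of_rat c" "of_rat c < T"
        using of_rat_dense[of 0 "fst p"] of_rat_dense[of "fst p" T] by (auto simp: cylQ_def)
      then show "ppart pos (u p - k) = 0"
        using elim p less_trans[of "of_rat a" "fst p" "of_rat c"] by blast
    qed
  qed
qed

theorem mainTheorem3:
  fixes \<Omega> :: "'d::euclidean_space set" and T :: real
    and f :: "real \<Rightarrow> 'd" and b :: "real \<Rightarrow> real" and \<mu> :: "'d measure"
    and uc :: "real \<times> 'd \<Rightarrow> real" and u0 :: "'d \<Rightarrow> real" and Lf :: real
    and u :: "real \<times> 'd \<Rightarrow> real"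
  assumes T: "T > 0"
    and \<Omega>: "open \<Omega>" "bounded \<Omega>" "C2_boundary \<Omega>"
    and f: "loc_lipschitz f"
    and b: "loc_lipschitz b" "mono b" "deriv_loc_bv b"
    and uc: "C2_on UNIV uc" "bounded (uc ` ({0..T} \<times> UNIV))"
    and u0: "u0 \<in> borel_measurable lebesgue" "\<exists>C. AE x in lebesgue. x \<in> \<Omega> \<longrightarrow> \<bar>u0 x\<bar> \<le> C"
    and \<mu>: "sets \<mu> = sets borel" "emeasure \<mu> {0} = 0"
       "\<forall>A\<in>sets borel. emeasure \<mu> (uminus ` A) = emeasure \<mu> A"
       "(\<integral>\<^sup>+ z. ennreal (min ((norm z)\<^sup>2) 1) \<partial>\<mu>) < \<infinity>"
    and Lf: "\<exists>a c. lipschitz_on Lf {a..c} f \<and>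
              (AE x in lebesgue. x \<in> \<Omega> \<longrightarrow> u0 x \<in> {a..c}) \<and>
              (\<forall>p\<in>{0..T} \<times> UNIV. uc p \<in> {a..c}) \<and>
              (AE p in lebesgue. p \<in> cylM T \<longrightarrow> u p \<in> {a..c})"
    and sol: "entropy_solution \<Omega> T f b \<mu> uc u0 Lf u"
  shows "AE p in lebesgue. p \<in> cylQ T \<Omega> \<longrightarrow>
           min (ess_inf_on \<Omega> u0) (ess_inf_on (cylQc T \<Omega>) uc) \<le> ereal (u p) \<and>
           ereal (u p) \<le> max (ess_sup_on \<Omega> u0) (ess_sup_on (cylQc T \<Omega>) uc)"
proof -
  \<comment> \<open>Only \<open>mono b\<close>, the geometry of \<open>\<Omega>\<close>, the continuity of \<open>u\<^sup>c\<close> and the integrability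
    condition on \<open>\<mu>\<close> are used.\<close>
  have "continuous_on UNIV uc"
    using uc(1) unfolding C2_on_def
    by (meson UNIV_I continuous_at_imp_continuous_on has_derivative_continuous)
  note comparison = entropy_solution_comparison[OF \<Omega> b(2) \<mu>(1)
      levy_measure_sigma_finite[OF \<mu>(1,2,4)] this sol]
  have "AE p in lebesgue. p \<in> cylQ T \<Omega> \<longrightarrow>
      ereal (u p) \<le> max (ess_sup_on \<Omega> u0) (ess_sup_on (cylQc T \<Omega>) uc)"
  proof (rule AE_ereal_le_if_AE_le_rat)
    fix q :: rat
    assume "max (ess_sup_on \<Omega> u0) (ess_sup_on (cylQc T \<Omega>) uc) < ereal (of_rat q)"
    then have "AE x in lebesgue. x \<in> \<Omega> \<longrightarrow> ppart True (u0 x - of_rat q) = 0"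
      "AE p in lebesgue. p \<in> cylQc T \<Omega> \<longrightarrow> ppart True (uc p - of_rat q) = 0"
      by (auto simp: ppart_eq_0_iff dest!: AE_le_if_ess_sup_on_less)
    from comparison[OF this] show "AE p in lebesgue. p \<in> cylQ T \<Omega> \<longrightarrow> u p \<le> of_rat q"
      by eventually_elim (simp add: ppart_eq_0_iff)
  qed
  moreover have "AE p in lebesgue. p \<in> cylQ T \<Omega> \<longrightarrow>
      min (ess_inf_on \<Omega> u0) (ess_inf_on (cylQc T \<Omega>) uc) \<le> ereal (u p)"
  proof (rule AE_ereal_ge_if_AE_ge_rat)
    fix q :: rat
    assume "ereal (of_rat q) < min (ess_inf_on \<Omega> u0) (ess_inf_on (cylQc T \<Omega>) uc)"
    then have "AE x in lebesgue. x \<in> \<Omega> \<longrightarrow> ppart False (u0 x - of_rat q) = 0"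
      "AE p in lebesgue. p \<in> cylQc T \<Omega> \<longrightarrow> ppart False (uc p - of_rat q) = 0"
      by (auto simp: ppart_eq_0_iff dest!: AE_ge_if_less_ess_inf_on)
    from comparison[OF this] show "AE p in lebesgue. p \<in> cylQ T \<Omega> \<longrightarrow> of_rat q \<le> u p"
      by eventually_elim (simp add: ppart_eq_0_iff)
  qed
  ultimately show ?thesis
    by eventually_elim simp
qed

end
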